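(* Consider the disclosure model described in the context. Let $d,d'\in\mathcal{D}$ be such that $d'$ is more transparent than $d$ and $d$ is Pareto efficient. Then $\Gamma(d')\ge\Gamma(d)$.
   Context: Emissions lie in $E=[0,\bar e]$ with $\bar e>0$. The firm's type $\theta\in\Theta=[\underline\theta,\bar\theta]$ is private information with a continuous density $f=F'$ on $\Theta$. The firm's profit is $\tilde\pi(\theta,e,\tilde e)$ with actual emission $e$ and market-perceived emission $\tilde e$; it is strictly increasing in $e$ and strictly decreasing in $\tilde e$. Standing assumptions: $\tilde\pi$ is continuous on $\Theta\times E\times E$ and $C^2$ on its interior; $\pi(\theta,e):=\tilde\pi(\theta,e,e)$ is strictly concave in $e$; and $\pi(\theta,0)<\pi(\theta,\bar e)$ for all $\theta$. A disclosure policy is a function $d:E\to E$, identified with the partition of $E$ into its level sets. An emission $e$ is belief-compatible under $d$ if $e\ge e'$ whenever $d(e')=d(e)$; $\tilde E_d$ is the set of such levels. The type-$\theta$ firm chooses $e\in\tilde E_d$ maximizing $\pi(\theta,e)$. $\mathcal{D}$ is the set of policies for which the maximum is attained for every type. For $d\in\mathcal{D}$, $\pi_d(\theta)=\max_{e\in\tilde E_d}\pi(\theta,e)$, and $\gamma_d(\theta)$ is the lowest maximizer. Further, $\Pi(d)=\int_\Theta\pi_d\,dF$ and $\Gamma(d)=\int_\Theta\gamma_d\,dF$. For distinct $d',d\in\mathcal{D}$, $d'$ is more transparent than $d$ if the partition of $d'$ is finer than that of $d$. A policy $d\in\mathcal{D}$ is Pareto efficient if there is no $d''\in\mathcal{D}$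 with $\Pi(d'')\ge\Pi(d)$ and $\Gamma(d'')\le\Gamma(d)$, at least one strict. *)

theory Defs
  imports "HOL-Analysis.Analysis"
begin

(* Emissions E = {0..eb}; types Theta = {tlo..thi}; pt theta e e_tilde is the profit pi~. *)

definition strict_concave_on :: "real set \<Rightarrow> (real \<Rightarrow> real) \<Rightarrow> bool" where
  "strict_concave_on S g \<longleftrightarrow>
     (\<forall>x\<in>S. \<forall>y\<in>S. x \<noteq> y \<longrightarrow> (\<forall>u::real. 0 < u \<and> u < 1 \<longrightarrow>
        g ((1 - u) * x + u * y) > (1 - u) * g x + u * g y))"

definition C2_on :: "('a::euclidean_space \<Rightarrow> real) \<Rightarrow> 'a set \<Rightarrow> bool" where
  "C2_on g S \<longleftrightarrow>
     (\<exists>(Dg :: 'a \<Rightarrow> ('a \<Rightarrow>\<^sub>L real)) (D2g :: 'a \<Rightarrow> ('a \<Rightarrow>\<^sub>L ('a \<Rightarrow>\<^sub>L real))).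
        (\<forall>x\<in>S. (g has_derivative blinfun_apply (Dg x)) (at x)) \<and>
        (\<forall>x\<in>S. (Dg has_derivative blinfun_apply (D2g x)) (at x)) \<and>
        continuous_on S D2g)"

definition policy :: "real \<Rightarrow> (real \<Rightarrow> real) \<Rightarrow> bool" where
  "policy eb d \<longleftrightarrow> (\<forall>e\<in>{0..eb}. d e \<in> {0..eb})"

definition Etil :: "real \<Rightarrow> (real \<Rightarrow> real) \<Rightarrow> real set" where
  "Etil eb d = {e \<in> {0..eb}. \<forall>e'\<in>{0..eb}. d e' = d e \<longrightarrow> e' \<le> e}"

definition inD :: "real \<Rightarrow> real \<Rightarrow> real \<Rightarrow> (real \<Rightarrow> real \<Rightarrow> real \<Rightarrow> real) \<Rightarrow> (real \<Rightarrow> real) \<Rightarrow> bool" where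
  "inD tlo thi eb pt d \<longleftrightarrow> policy eb d \<and>
     (\<forall>\<theta>\<in>{tlo..thi}. \<exists>e\<in>Etil eb d. \<forall>e'\<in>Etil eb d. pt \<theta> e' e' \<le> pt \<theta> e e)"

definition pi_d :: "real \<Rightarrow> (real \<Rightarrow> real \<Rightarrow> real \<Rightarrow> real) \<Rightarrow> (real \<Rightarrow> real) \<Rightarrow> real \<Rightarrow> real" where
  "pi_d eb pt d \<theta> = Sup ((\<lambda>e. pt \<theta> e e) ` Etil eb d)"

definition gamma_d :: "real \<Rightarrow> (real \<Rightarrow> real \<Rightarrow> real \<Rightarrow> real) \<Rightarrow> (real \<Rightarrow> real) \<Rightarrow> real \<Rightarrow> real" where
  "gamma_d eb pt d \<theta> = Inf {e \<in> Etil eb d. pt \<theta> e e = pi_d eb pt d \<theta>}"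

definition Pi_val :: "real \<Rightarrow> real \<Rightarrow> (real \<Rightarrow> real) \<Rightarrow> real \<Rightarrow> (real \<Rightarrow> real \<Rightarrow> real \<Rightarrow> real) \<Rightarrow> (real \<Rightarrow> real) \<Rightarrow> real" where
  "Pi_val tlo thi f eb pt d = integral {tlo..thi} (\<lambda>\<theta>. f \<theta> * pi_d eb pt d \<theta>)"

definition Gamma_val :: "real \<Rightarrow> real \<Rightarrow> (real \<Rightarrow> real) \<Rightarrow> real \<Rightarrow> (real \<Rightarrow> real \<Rightarrow> real \<Rightarrow> real) \<Rightarrow> (real \<Rightarrow> real) \<Rightarrow> real" where
  "Gamma_val tlo thi f eb pt d = integral {tlo..thi} (\<lambda>\<theta>. f \<theta> * gamma_d eb pt d \<theta>)"

definition more_transparent :: "real \<Rightarrow> (real \<Rightarrow> real) \<Rightarrow> (real \<Rightarrow> real) \<Rightarrow> bool" where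
  "more_transparent eb d' d \<longleftrightarrow> (\<exists>e\<in>{0..eb}. d' e \<noteq> d e) \<and>
     (\<forall>e1\<in>{0..eb}. \<forall>e2\<in>{0..eb}. d' e1 = d' e2 \<longrightarrow> d e1 = d e2)"

definition pareto_efficient :: "real \<Rightarrow> real \<Rightarrow> (real \<Rightarrow> real) \<Rightarrow> real \<Rightarrow> (real \<Rightarrow> real \<Rightarrow> real \<Rightarrow> real) \<Rightarrow> (real \<Rightarrow> real) \<Rightarrow> bool" where
  "pareto_efficient tlo thi f eb pt d \<longleftrightarrow> inD tlo thi eb pt d \<and>
     \<not> (\<exists>d''. inD tlo thi eb pt d'' \<and>
           Pi_val tlo thi f eb pt d'' \<ge> Pi_val tlo thi f eb pt d \<and>
           Gamma_val tlo thi f eb pt d'' \<le> Gamma_val tlo thi f eb pt d \<and>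
           (Pi_val tlo thi f eb pt d'' > Pi_val tlo thi f eb pt d \<or>
            Gamma_val tlo thi f eb pt d'' < Gamma_val tlo thi f eb pt d))"

end

theory Submission
  imports Defs
begin

text \<open>A finer partition leaves more emission levels belief-compatible, so every type can do at
least as well under \<open>d'\<close> as under \<open>d\<close> and aggregate profit weakly rises. If aggregate
emissions fell strictly, \<open>d'\<close> would Pareto dominate \<open>d\<close>. Only continuity of \<open>\<tilde>\<pi>\<close> and
\<open>f\<close> (for integrability) and \<open>f \<ge> 0\<close> are needed.\<close>

lemma Etil_mono_finer:
  assumes "\<forall>e1\<in>{0..eb}. \<forall>e2\<in>{0..eb}. d' e1 = d' e2 \<longrightarrow> d e1 = d e2"
  shows "Etil eb d \<subseteq> Etil eb d'"
  using assms unfolding Etil_def by blast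

lemma pi_d_attained:
  assumes "inD tlo thi eb pt d" "\<theta> \<in> {tlo..thi}"
  obtains e where "e \<in> Etil eb d" "pi_d eb pt d \<theta> = pt \<theta> e e"
    "\<forall>e'\<in>Etil eb d. pt \<theta> e' e' \<le> pi_d eb pt d \<theta>"
proof -
  obtain e where e: "e \<in> Etil eb d" "\<forall>e'\<in>Etil eb d. pt \<theta> e' e' \<le> pt \<theta> e e"
    using assms unfolding inD_def by blast
  have "pi_d eb pt d \<theta> = pt \<theta> e e"
    unfolding pi_d_def by (rule cSup_eq_maximum) (use e in auto)
  with e that show ?thesis by auto
qed

lemma pi_d_mono:
  assumes "inD tlo thi eb pt d" "inD tlo thi eb pt d'" "Etil eb d \<subseteq> Etil eb d'"
    and "\<theta> \<in> {tlo..thi}"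
  shows "pi_d eb pt d \<theta> \<le> pi_d eb pt d' \<theta>"
proof -
  obtain e where "e \<in> Etil eb d" "pi_d eb pt d \<theta> = pt \<theta> e e"
    using pi_d_attained[OF assms(1,4)] by blast
  moreover have "\<forall>x\<in>Etil eb d'. pt \<theta> x x \<le> pi_d eb pt d' \<theta>"
    using pi_d_attained[OF assms(2,4)] by blast
  ultimately show ?thesis using assms(3) by auto
qed

lemma continuous_on_attained_max:
  fixes g :: "'a::metric_space \<Rightarrow> 'b \<Rightarrow> real"
  assumes max: "\<And>x. x \<in> A \<Longrightarrow> \<exists>e\<in>S. v x = g x e \<and> (\<forall>e'\<in>S. g x e' \<le> v x)"
    and equi: "\<And>\<epsilon>. \<epsilon> > 0 \<Longrightarrow>
      \<exists>\<delta>>0. \<forall>x\<in>A. \<forall>y\<in>A. dist y x < \<delta> \<longrightarrow> (\<forall>e\<in>S. \<bar>g y e - g x e\<bar> < \<epsilon>)"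
  shows "continuous_on A v"
  unfolding continuous_on_iff
proof (intro ballI allI impI)
  fix x and \<epsilon> :: real assume x: "x \<in> A" and "0 < \<epsilon>"
  then obtain \<delta> where "\<delta> > 0"
    and \<delta>: "\<forall>y\<in>A. dist y x < \<delta> \<longrightarrow> (\<forall>e\<in>S. \<bar>g y e - g x e\<bar> < \<epsilon>)"
    using equi by blast
  have "dist (v y) (v x) < \<epsilon>" if y: "y \<in> A" "dist y x < \<delta>" for y
  proof -
    obtain ex where ex: "ex \<in> S" "v x = g x ex" "\<forall>e'\<in>S. g x e' \<le> v x"
      using max[OF x] by blast
    obtain ey where ey: "ey \<in> S" "v y = g y ey" "\<forall>e'\<in>S. g y e' \<le> v y"
      using max[OF y(1)] by blast
    have "\<bar>g y ex - g x ex\<bar> < \<epsilon>" "\<bar>g y ey - g x ey\<bar> < \<epsilon>"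
      using \<delta> y ex(1) ey(1) by auto
    moreover have "g x ey \<le> v x" "g y ex \<le> v y"
      using ex(3) ey(3) ex(1) ey(1) by auto
    ultimately show ?thesis
      using ex(2) ey(2) by (simp add: dist_real_def abs_less_iff)
  qed
  with \<open>\<delta> > 0\<close> show "\<exists>\<delta>>0. \<forall>y\<in>A. dist y x < \<delta> \<longrightarrow> dist (v y) (v x) < \<epsilon>"
    by blast
qed

lemma continuous_on_pi_d:
  assumes dD: "inD tlo thi eb pt d"
    and pt_cont: "continuous_on ({tlo..thi} \<times> {0..eb} \<times> {0..eb}) (\<lambda>(\<theta>, e, et). pt \<theta> e et)"
  shows "continuous_on {tlo..thi} (pi_d eb pt d)"
proof (rule continuous_on_attained_max[where g = "\<lambda>\<theta> e. pt \<theta> e e" and S = "Etil eb d"])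
  show "\<exists>e\<in>Etil eb d. pi_d eb pt d \<theta> = pt \<theta> e e \<and> (\<forall>e'\<in>Etil eb d. pt \<theta> e' e' \<le> pi_d eb pt d \<theta>)"
    if "\<theta> \<in> {tlo..thi}" for \<theta>
    using pi_d_attained[OF dD that] by metis
next
  let ?g = "\<lambda>p::real \<times> real. pt (fst p) (snd p) (snd p)"
  have "continuous_on ({tlo..thi} \<times> {0..eb})
      ((\<lambda>(\<theta>, e, et). pt \<theta> e et) \<circ> (\<lambda>p. (fst p, snd p, snd p)))"
    by (rule continuous_on_compose, intro continuous_intros,
        rule continuous_on_subset[OF pt_cont]) auto
  then have "continuous_on ({tlo..thi} \<times> {0..eb}) ?g"
    by (simp add: o_def case_prod_beta)
  then have uc: "uniformly_continuous_on ({tlo..thi} \<times> {0..eb}) ?g"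
    by (intro compact_uniformly_continuous compact_Times compact_Icc)
  fix \<epsilon> :: real assume "\<epsilon> > 0"
  then obtain \<delta> where "\<delta> > 0" and \<delta>: "\<forall>p\<in>{tlo..thi} \<times> {0..eb}. \<forall>q\<in>{tlo..thi} \<times> {0..eb}.
      dist q p < \<delta> \<longrightarrow> dist (?g q) (?g p) < \<epsilon>"
    using uc unfolding uniformly_continuous_on_def by meson
  have "\<bar>pt y e e - pt x e e\<bar> < \<epsilon>"
    if "x \<in> {tlo..thi}" "y \<in> {tlo..thi}" "dist y x < \<delta>" "e \<in> Etil eb d" for x y e
  proof -
    have "e \<in> {0..eb}" using that(4) unfolding Etil_def by blast
    then show ?thesis
      using \<delta> that(1-3) by (fastforce simp: dist_Pair_Pair dist_real_def)
  qed
  with \<open>\<delta> > 0\<close> show "\<exists>\<delta>>0. \<forall>x\<in>{tlo..thi}. \<forall>y\<in>{tlo..thi}. dist y x < \<delta> \<longrightarrow>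
      (\<forall>e\<in>Etil eb d. \<bar>pt y e e - pt x e e\<bar> < \<epsilon>)"
    by blast
qed

lemma Pi_val_mono:
  assumes dD: "inD tlo thi eb pt d" and d'D: "inD tlo thi eb pt d'"
    and sub: "Etil eb d \<subseteq> Etil eb d'"
    and f_cont: "continuous_on {tlo..thi} f" and f_nonneg: "\<forall>\<theta>\<in>{tlo..thi}. f \<theta> \<ge> 0"
    and pt_cont: "continuous_on ({tlo..thi} \<times> {0..eb} \<times> {0..eb}) (\<lambda>(\<theta>, e, et). pt \<theta> e et)"
  shows "Pi_val tlo thi f eb pt d \<le> Pi_val tlo thi f eb pt d'"
  unfolding Pi_val_def
proof (rule integral_le)
  show "(\<lambda>\<theta>. f \<theta> * pi_d eb pt d \<theta>) integrable_on {tlo..thi}"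
    "(\<lambda>\<theta>. f \<theta> * pi_d eb pt d' \<theta>) integrable_on {tlo..thi}"
    using continuous_on_pi_d[OF dD pt_cont] continuous_on_pi_d[OF d'D pt_cont] f_cont
    by (auto intro!: integrable_continuous_interval continuous_on_mult)
  show "f \<theta> * pi_d eb pt d \<theta> \<le> f \<theta> * pi_d eb pt d' \<theta>" if "\<theta> \<in> {tlo..thi}" for \<theta>
    using pi_d_mono[OF dD d'D sub that] f_nonneg that by (simp add: mult_left_mono)
qed

lemma pareto_efficient_Gamma_le:
  assumes "pareto_efficient tlo thi f eb pt d" "inD tlo thi eb pt d''"
    and "Pi_val tlo thi f eb pt d \<le> Pi_val tlo thi f eb pt d''"
  shows "Gamma_val tlo thi f eb pt d \<le> Gamma_val tlo thi f eb pt d''"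
  using assms unfolding pareto_efficient_def by (meson not_le order.strict_implies_order)

theorem proposition4:
  fixes tlo thi eb :: real and f :: "real \<Rightarrow> real"
    and pt :: "real \<Rightarrow> real \<Rightarrow> real \<Rightarrow> real"
    and d d' :: "real \<Rightarrow> real"
  assumes theta_lt: "tlo < thi" and eb_pos: "eb > 0"
    and f_cont: "continuous_on {tlo..thi} f"
    and f_nonneg: "\<forall>\<theta>\<in>{tlo..thi}. f \<theta> \<ge> 0"
    and f_density: "(f has_integral 1) {tlo..thi}"
    and pt_cont: "continuous_on ({tlo..thi} \<times> {0..eb} \<times> {0..eb}) (\<lambda>(\<theta>, e, et). pt \<theta> e et)"
    and pt_C2: "C2_on (\<lambda>(\<theta>, e, et). pt \<theta> e et) ({tlo<..<thi} \<times> {0<..<eb} \<times> {0<..<eb})"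
    and pt_incr: "\<forall>\<theta>\<in>{tlo..thi}. \<forall>et\<in>{0..eb}. \<forall>e1\<in>{0..eb}. \<forall>e2\<in>{0..eb}.
                    e1 < e2 \<longrightarrow> pt \<theta> e1 et < pt \<theta> e2 et"
    and pt_decr: "\<forall>\<theta>\<in>{tlo..thi}. \<forall>e\<in>{0..eb}. \<forall>et1\<in>{0..eb}. \<forall>et2\<in>{0..eb}.
                    et1 < et2 \<longrightarrow> pt \<theta> e et2 < pt \<theta> e et1"
    and pi_concave: "\<forall>\<theta>\<in>{tlo..thi}. strict_concave_on {0..eb} (\<lambda>e. pt \<theta> e e)"
    and pi_ends: "\<forall>\<theta>\<in>{tlo..thi}. pt \<theta> 0 0 < pt \<theta> eb eb"
    and dD: "inD tlo thi eb pt d" and d'D: "inD tlo thi eb pt d'"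
    and transp: "more_transparent eb d' d"
    and eff: "pareto_efficient tlo thi f eb pt d"
  shows "Gamma_val tlo thi f eb pt d' \<ge> Gamma_val tlo thi f eb pt d"
proof -
  have "Etil eb d \<subseteq> Etil eb d'"
    using transp unfolding more_transparent_def by (intro Etil_mono_finer) blast
  then have "Pi_val tlo thi f eb pt d \<le> Pi_val tlo thi f eb pt d'"
    using Pi_val_mono dD d'D f_cont f_nonneg pt_cont by blast
  then show ?thesis
    using pareto_efficient_Gamma_le[OF eff d'D] by blast
qed

end
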